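(* Let $G$ and $H$ be finite abelian groups, written additively, of the same even order $k>2$, let $f:G\to H$ be semi-planar, and suppose $S(G,H;f)$ splits into two substructures $S_1$ and $S_2$ with $\mathcal{L}(0,0)\in S_1$. For $i=1,2$ and $a\in G$ let $P_a^i=\{b\in H : \mathcal{L}(a,b)\in S_i\}$. If $a,c\in G$ and $P_a^i\cap P_c^i\neq\varnothing$ for $i=1$ or $i=2$, then $P_{a-c}^1=P_{c-a}^1=P_0^1$.
   Context: A function $f:G\to H$ is semi-planar if for every non-identity $a\in G$ and every $y\in H$, the equation $f(x+a)-f(x)=y$ has either $0$ or $2$ solutions $x\in G$. The incidence structure $S(G,H;f)$ has points $(x,y)\in G\times H$ and lines $\mathcal{L}(a,b)$ for $(a,b)\in G\times H$, with $(x,y)$ incident with $\mathcal{L}(a,b)$ iff $y=f(x-a)+b$. Its incidence graph is the bipartite graph on points and lines with an edge for each incident pair. $S(G,H;f)$ splits into two substructures $S_1,S_2$ if its incidence graph has exactly two connected components; $S_1,S_2$ are the incidence structures formed by the points and lines of the two components, and $\mathcal{L}(a,b)\in S_i$ means the line lies in component $S_i$. *)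

theory Defs
  imports Main
begin

definition semi_planar :: "('g::{ab_group_add,finite} \<Rightarrow> 'h::{ab_group_add,finite}) \<Rightarrow> bool" where
  "semi_planar f \<longleftrightarrow>
     (\<forall>a. a \<noteq> 0 \<longrightarrow> (\<forall>y. card {x. f (x + a) - f x = y} \<in> {0, 2}))"

text \<open>Vertices of the incidence graph: points Inl (x,y) and lines Inr (a,b).\<close>
type_synonym ('g,'h) vertex = "('g \<times> 'h) + ('g \<times> 'h)"

definition incident :: "('g::ab_group_add \<Rightarrow> 'h::ab_group_add) \<Rightarrow> 'g \<times> 'h \<Rightarrow> 'g \<times> 'h \<Rightarrow> bool" where
  "incident f p l \<longleftrightarrow> snd p = f (fst p - fst l) + snd l"

definition inc_edge :: "('g::ab_group_add \<Rightarrow> 'h::ab_group_add) \<Rightarrow> ('g,'h) vertex \<Rightarrow> ('g,'h) vertex \<Rightarrow> bool" where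
  "inc_edge f u v \<longleftrightarrow>
     (\<exists>p l. (u = Inl p \<and> v = Inr l \<or> u = Inr l \<and> v = Inl p) \<and> incident f p l)"

definition inc_conn :: "('g::ab_group_add \<Rightarrow> 'h::ab_group_add) \<Rightarrow> ('g,'h) vertex rel" where
  "inc_conn f = {(u, v). (inc_edge f)\<^sup>*\<^sup>* u v}"

definition components :: "('g::ab_group_add \<Rightarrow> 'h::ab_group_add) \<Rightarrow> ('g,'h) vertex set set" where
  "components f = UNIV // inc_conn f"

text \<open>S(G,H;f) splits into two substructures: exactly two connected components.\<close>
definition splits_in_two :: "('g::ab_group_add \<Rightarrow> 'h::ab_group_add) \<Rightarrow> bool" where
  "splits_in_two f \<longleftrightarrow> card (components f) = 2"

text \<open>S_1 is the component containing the line L(0,0); S_2 the other one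
  (when there are exactly two components, it is the complement of S_1).\<close>
definition substr :: "('g::ab_group_add \<Rightarrow> 'h::ab_group_add) \<Rightarrow> nat \<Rightarrow> ('g,'h) vertex set" where
  "substr f i = (if i = 1 then inc_conn f `` {Inr (0, 0)} else - (inc_conn f `` {Inr (0, 0)}))"

definition Pset :: "('g::ab_group_add \<Rightarrow> 'h::ab_group_add) \<Rightarrow> nat \<Rightarrow> 'g \<Rightarrow> 'h set" where
  "Pset f i a = {b. Inr (a, b) \<in> substr f i}"

end

theory Submission
  imports Defs "HOL-Library.Product_Plus"
begin

text \<open>Translating every point and line by the same element of \<open>G \<times> H\<close> is an automorphism of the
  incidence graph. Hence the lines in the component of \<open>\<L>(0,0)\<close> form a subgroup of
  \<open>G \<times> H\<close>. If there are only two components, any two lines outside that component are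
  connected, and translating one of them to \<open>\<L>(0,0)\<close> puts their difference into the subgroup.
  A common element \<open>b \<in> P\<^sub>a\<^sup>i \<inter> P\<^sub>c\<^sup>i\<close> thus gives \<open>(a - c, 0)\<close> in the subgroup, and translating by it
  fixes \<open>P\<^sub>0\<^sup>1\<close>.\<close>

definition translate :: "'a::plus \<Rightarrow> 'a + 'a \<Rightarrow> 'a + 'a" where
  "translate t = map_sum ((+) t) ((+) t)"

lemma incident_translate: "incident f (t + p) (t + l) \<longleftrightarrow> incident f p l"
  by (simp add: incident_def algebra_simps)

lemma inc_edge_translate:
  assumes "inc_edge f u v"
  shows "inc_edge f (translate t u) (translate t v)"
proof -
  from assms obtain p l where "u = Inl p \<and> v = Inr l \<or> u = Inr l \<and> v = Inl p" "incident f p l"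
    unfolding inc_edge_def by blast
  then show ?thesis
    unfolding inc_edge_def translate_def
    by (intro exI[of _ "t + p"] exI[of _ "t + l"]) (auto simp: incident_translate)
qed

lemma inc_conn_translate:
  assumes "(u, v) \<in> inc_conn f"
  shows "(translate t u, translate t v) \<in> inc_conn f"
proof -
  have "(inc_edge f)\<^sup>*\<^sup>* u v"
    using assms by (simp add: inc_conn_def)
  then have "(inc_edge f)\<^sup>*\<^sup>* (translate t u) (translate t v)"
    by (induction rule: rtranclp_induct) (auto intro: rtranclp.rtrancl_into_rtrancl inc_edge_translate)
  then show ?thesis
    by (simp add: inc_conn_def)
qed

lemma inc_edge_sym: "inc_edge f u v \<Longrightarrow> inc_edge f v u"
  unfolding inc_edge_def by blast

lemma inc_conn_refl: "(u, u) \<in> inc_conn f"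
  by (simp add: inc_conn_def)

lemma inc_conn_sym: "(u, v) \<in> inc_conn f \<Longrightarrow> (v, u) \<in> inc_conn f"
proof -
  have "symp (inc_edge f)"
    by (rule sympI) (rule inc_edge_sym)
  then show "(u, v) \<in> inc_conn f \<Longrightarrow> (v, u) \<in> inc_conn f"
    unfolding inc_conn_def by (simp add: sympD[OF symp_rtranclp])
qed

lemma inc_conn_trans: "(u, v) \<in> inc_conn f \<Longrightarrow> (v, w) \<in> inc_conn f \<Longrightarrow> (u, w) \<in> inc_conn f"
  unfolding inc_conn_def by simp

lemma equiv_inc_conn: "equiv UNIV (inc_conn f)"
  by (intro equivI refl_onI symI transI) (auto intro: inc_conn_refl inc_conn_sym inc_conn_trans)

lemma related_if_unrelated_to_same:
  assumes "equiv A r" "finite (A // r)" "card (A // r) \<le> 2"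
    and "x \<in> A" "y \<in> A" "z \<in> A" "(x, y) \<notin> r" "(x, z) \<notin> r"
  shows "(y, z) \<in> r"
proof (rule ccontr)
  assume "(y, z) \<notin> r"
  with assms have "r `` {x} \<noteq> r `` {y}" "r `` {x} \<noteq> r `` {z}" "r `` {y} \<noteq> r `` {z}"
    by (simp_all add: eq_equiv_class_iff)
  then have "card {r `` {x}, r `` {y}, r `` {z}} = 3"
    by simp
  moreover have "{r `` {x}, r `` {y}, r `` {z}} \<subseteq> A // r"
    using assms(4-6) by (auto intro: quotientI)
  ultimately have "3 \<le> card (A // r)"
    using card_mono[OF assms(2)] by metis
  with assms(3) show False
    by simp
qed

definition base_lines :: "('g::ab_group_add \<Rightarrow> 'h::ab_group_add) \<Rightarrow> ('g \<times> 'h) set" where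
  "base_lines f = {l. (Inr 0, Inr l) \<in> inc_conn f}"

lemma Pset_1: "Pset f 1 a = {b. (a, b) \<in> base_lines f}"
  by (simp add: Pset_def substr_def base_lines_def zero_prod_def)

lemma Pset_2: "Pset f 2 a = {b. (a, b) \<notin> base_lines f}"
  by (simp add: Pset_def substr_def base_lines_def zero_prod_def)

lemma base_lines_add:
  assumes "l \<in> base_lines f" "m \<in> base_lines f"
  shows "l + m \<in> base_lines f"
proof -
  have "(Inr l, Inr (l + m)) \<in> inc_conn f"
    using inc_conn_translate[of "Inr 0" "Inr m" f l] assms(2)
    by (simp add: base_lines_def translate_def)
  with assms(1) show ?thesis
    unfolding base_lines_def by (blast intro: inc_conn_trans)
qed

lemma base_lines_uminus:
  assumes "l \<in> base_lines f"
  shows "- l \<in> base_lines f"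
proof -
  have "(Inr (- l), Inr 0) \<in> inc_conn f"
    using inc_conn_translate[of "Inr 0" "Inr l" f "- l"] assms
    by (simp add: base_lines_def translate_def)
  then show ?thesis
    unfolding base_lines_def by (blast intro: inc_conn_sym)
qed

lemma base_lines_diff:
  assumes "l \<in> base_lines f" "m \<in> base_lines f"
  shows "l - m \<in> base_lines f"
  using base_lines_add[OF assms(1) base_lines_uminus[OF assms(2)]] by simp

lemma base_lines_diff_if_splits_in_two:
  fixes f :: "'g::{ab_group_add,finite} \<Rightarrow> 'h::{ab_group_add,finite}"
  assumes "splits_in_two f" "l \<notin> base_lines f" "m \<notin> base_lines f"
  shows "l - m \<in> base_lines f"
proof -
  have "(Inr l, Inr m) \<in> inc_conn f"
    using related_if_unrelated_to_same[OF equiv_inc_conn, of f "Inr 0"] assms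
    by (simp add: splits_in_two_def components_def base_lines_def)
  from inc_conn_translate[OF this, of "- m"]
  have "(Inr (l - m), Inr 0) \<in> inc_conn f"
    by (simp add: translate_def)
  then show ?thesis
    unfolding base_lines_def by (blast intro: inc_conn_sym)
qed

lemma Pset_1_eq_Pset_1_0:
  assumes "(d, 0) \<in> base_lines f"
  shows "Pset f 1 d = Pset f 1 0"
proof -
  have "(d, b) \<in> base_lines f \<longleftrightarrow> (0, b) \<in> base_lines f" for b
    using base_lines_diff[OF _ assms, of "(d, b)"] base_lines_add[OF _ assms, of "(0, b)"]
    by auto
  then show ?thesis
    unfolding Pset_1 by blast
qed

theorem lemma5:
  fixes f :: "'g::{ab_group_add,finite} \<Rightarrow> 'h::{ab_group_add,finite}"
    and a c :: 'g
  assumes "card (UNIV :: 'g set) = card (UNIV :: 'h set)"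
    and "even (card (UNIV :: 'g set))"
    and "card (UNIV :: 'g set) > 2"
    and "semi_planar f"
    and "splits_in_two f"
    and "\<exists>i\<in>{1::nat, 2}. Pset f i a \<inter> Pset f i c \<noteq> {}"
  shows "Pset f 1 (a - c) = Pset f 1 0 \<and> Pset f 1 (c - a) = Pset f 1 0"
proof -
  from assms(6) obtain i b where "i \<in> {1, 2}" "b \<in> Pset f i a" "b \<in> Pset f i c"
    by blast
  then have "(a, b) - (c, b) \<in> base_lines f"
  proof (elim insertE emptyE)
    assume "i = 1"
    with \<open>b \<in> Pset f i a\<close> \<open>b \<in> Pset f i c\<close> show ?thesis
      using base_lines_diff Pset_1[of f a] Pset_1[of f c] by blast
  next
    assume "i = 2"
    with \<open>b \<in> Pset f i a\<close> \<open>b \<in> Pset f i c\<close> show ?thesis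
      using base_lines_diff_if_splits_in_two[OF assms(5)] Pset_2[of f a] Pset_2[of f c] by blast
  qed
  then have "(a - c, 0) \<in> base_lines f"
    by simp
  moreover from base_lines_uminus[OF this] have "(c - a, 0) \<in> base_lines f"
    by simp
  ultimately show ?thesis
    using Pset_1_eq_Pset_1_0 by blast
qed

end
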